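(* Let $G$ be a finite commutative transitive group with trivial center, and let $G_1,\dots,G_n$ be its maximal abelian subgroups, which cover $G$, with $n\geq3$. Set $$\rho(n)=1+(n-1)\prod_{i=1}^n|G_i|-\sum_{i=1}^n\prod_{j\neq i}|G_j|,\qquad \mathcal N_G=1+(n-1)|G|-\sum_{i=1}^n\frac{|G|}{|G_i|}.$$ Then $\rho(n)>\mathcal N_G$.
   Context: A group $G$ is commutative transitive (CT) if commutation is transitive on non-central elements: for all non-central $a,b,c\in G$, $[a,b]=[b,c]=1$ implies $[a,c]=1$. $\rho(n)$ is the rank of the free kernel of $G_1*\cdots*G_n\to G_1\times\cdots\times G_n$, and $\mathcal N_G$ is the rank of the free group $\pi_1(E(2,G))$ (with $E(2,G)$ the homotopy fibre of $B(2,G)\to BG$, where $B(2,G)$ is the geometric realization of the simplicial subspace of the bar construction of $G$ whose $k$-simplices are the pairwise commuting $k$-tuples $\mathrm{Hom}(\mathbb Z^k,G)\subseteq G^k$). *)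

theory Defs
  imports "HOL-Algebra.Algebra"
begin

definition group_center :: "('a, 'b) monoid_scheme \<Rightarrow> 'a set" where
  "group_center G = {z \<in> carrier G. \<forall>x \<in> carrier G. z \<otimes>\<^bsub>G\<^esub> x = x \<otimes>\<^bsub>G\<^esub> z}"

definition commutative_transitive :: "('a, 'b) monoid_scheme \<Rightarrow> bool" where
  "commutative_transitive G \<longleftrightarrow>
     (\<forall>a \<in> carrier G - group_center G. \<forall>b \<in> carrier G - group_center G.
      \<forall>c \<in> carrier G - group_center G.
        a \<otimes>\<^bsub>G\<^esub> b = b \<otimes>\<^bsub>G\<^esub> a \<longrightarrow> b \<otimes>\<^bsub>G\<^esub> c = c \<otimes>\<^bsub>G\<^esub> b \<longrightarrow>
        a \<otimes>\<^bsub>G\<^esub> c = c \<otimes>\<^bsub>G\<^esub> a)"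

definition abelian_subgroup :: "'a set \<Rightarrow> ('a, 'b) monoid_scheme \<Rightarrow> bool" where
  "abelian_subgroup H G \<longleftrightarrow> subgroup H G \<and>
     (\<forall>x \<in> H. \<forall>y \<in> H. x \<otimes>\<^bsub>G\<^esub> y = y \<otimes>\<^bsub>G\<^esub> x)"

definition maximal_abelian_subgroup :: "'a set \<Rightarrow> ('a, 'b) monoid_scheme \<Rightarrow> bool" where
  "maximal_abelian_subgroup H G \<longleftrightarrow> abelian_subgroup H G \<and>
     (\<forall>K. abelian_subgroup K G \<longrightarrow> H \<subseteq> K \<longrightarrow> K = H)"

end

theory Submission
  imports Defs
begin

text \<open>Distinct maximal abelian subgroups of a commutative transitive group with trivial centre
  meet trivially, because each is the centraliser of any of its nontrivial elements. Hence
  \<open>|G| = 1 + \<Sum>(a\<^sub>i - 1)\<close> with \<open>a\<^sub>i = |G\<^sub>i| \<ge> 2\<close> dividing \<open>|G|\<close>. Writing \<open>P = \<Prod>a\<^sub>i\<close>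
  and \<open>D = P - |G| > 0\<close>, the difference \<open>c\<^sub>i = P/a\<^sub>i - |G|/a\<^sub>i\<close> equals \<open>D/a\<^sub>i \<le> D/2\<close>, so
  \<open>\<rho>(n) - N\<^sub>G = (n-1) D - \<Sum>c\<^sub>i \<ge> (n/2 - 1) D > 0\<close> as soon as \<open>n \<ge> 3\<close>.\<close>

lemma prod_gt_one_plus_sum_pred:
  fixes a :: "nat \<Rightarrow> int"
  assumes "n \<ge> 2" and "\<And>i. i < n \<Longrightarrow> a i \<ge> 2"
  shows "(\<Prod>i<n. a i) > 1 + (\<Sum>i<n. a i - 1)"
  using assms
proof (induction n rule: nat_induct_at_least)
  case base
  then have "a 0 \<ge> 2" "a 1 \<ge> 2" by auto
  then have "(a 0 - 1) * (a 1 - 1) > 0" by simp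
  then show ?case by (simp add: numeral_2_eq_2 algebra_simps)
next
  case (Suc m)
  have a_ge: "a i \<ge> 2" if "i \<le> m" for i using Suc.prems that by simp
  then have "(\<Prod>i<m. a i) > 1 + (\<Sum>i<m. a i - 1)" using Suc.IH by simp
  then have IH: "(\<Prod>i<m. a i) \<ge> 2 + (\<Sum>i<m. a i - 1)" by linarith
  have am: "a m \<ge> 2" using a_ge by simp
  have "a i - 1 \<ge> 0" if "i < m" for i using a_ge[of i] that by simp
  then have S: "(\<Sum>i<m. a i - 1) \<ge> 0" by (meson lessThan_iff sum_nonneg)
  have "(\<Prod>i<m. a i) * a m \<ge> (2 + (\<Sum>i<m. a i - 1)) * a m"
    using IH am by (intro mult_right_mono) auto
  moreover have "(2 + (\<Sum>i<m. a i - 1)) * (a m - 1) \<ge> 2 * (a m - 1)"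
    using S am by (intro mult_right_mono) auto
  then have "(2 + (\<Sum>i<m. a i - 1)) * a m \<ge> 2 + (\<Sum>i<m. a i - 1) + a m"
    using am by (simp add: algebra_simps)
  ultimately show ?case by simp
qed

lemma prod_formula_gt_quotient_formula:
  fixes a :: "nat \<Rightarrow> int" and N :: int
  assumes a2: "\<And>i. i < n \<Longrightarrow> a i \<ge> 2" and n3: "n \<ge> 3"
    and N: "N = 1 + (\<Sum>i<n. a i - 1)" and dvd: "\<And>i. i < n \<Longrightarrow> a i dvd N"
  shows "1 + (int n - 1) * (\<Prod>i<n. a i) - (\<Sum>i<n. \<Prod>j\<in>{..<n} - {i}. a j)
         > 1 + (int n - 1) * N - (\<Sum>i<n. N div a i)"
proof -
  define P where "P = (\<Prod>i<n. a i)"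
  define D where "D = P - N"
  define c where "c i = (\<Prod>j\<in>{..<n} - {i}. a j) - N div a i" for i
  have D_pos: "D > 0"
    using prod_gt_one_plus_sum_pred[of n a] a2 n3 N unfolding D_def P_def by auto
  have a_times_c: "a i * c i = D" if "i < n" for i
  proof -
    have "P = a i * (\<Prod>j\<in>{..<n} - {i}. a j)"
      unfolding P_def using that by (simp add: prod.remove)
    moreover have "a i * (N div a i) = N" using dvd[OF that] by simp
    ultimately show ?thesis unfolding c_def D_def by (simp add: algebra_simps)
  qed
  have c_le: "2 * c i \<le> D" if "i < n" for i
  proof -
    have "0 < a i * c i" "0 < a i" using a_times_c[OF that] D_pos a2[OF that] by auto
    then have "c i > 0" by (rule zero_less_mult_pos)
    then have "2 * c i \<le> a i * c i" using a2[OF that] by (simp add: mult_right_mono)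
    then show ?thesis using a_times_c[OF that] by simp
  qed
  have "2 * (\<Sum>i<n. c i) \<le> int n * D"
    using sum_mono[of "{..<n}" "\<lambda>i. 2 * c i" "\<lambda>_. D"] c_le by (simp add: sum_distrib_left)
  moreover have "(\<Sum>i<n. c i) = (\<Sum>i<n. \<Prod>j\<in>{..<n} - {i}. a j) - (\<Sum>i<n. N div a i)"
    unfolding c_def by (simp add: sum_subtractf)
  moreover have "(int n - 2) * D > 0" using D_pos n3 by (intro mult_pos_pos) auto
  ultimately show ?thesis unfolding D_def P_def by (simp add: algebra_simps)
qed

definition centralizer :: "('a, 'b) monoid_scheme \<Rightarrow> 'a \<Rightarrow> 'a set" where
  "centralizer G x = {g \<in> carrier G. g \<otimes>\<^bsub>G\<^esub> x = x \<otimes>\<^bsub>G\<^esub> g}"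

context group
begin

lemma inv_commute:
  assumes "g \<in> carrier G" "x \<in> carrier G" "g \<otimes> x = x \<otimes> g"
  shows "inv g \<otimes> x = x \<otimes> inv g"
proof -
  have "inv g \<otimes> x = inv g \<otimes> (x \<otimes> g) \<otimes> inv g" using assms by (simp add: m_assoc)
  also have "\<dots> = inv g \<otimes> (g \<otimes> x) \<otimes> inv g" using assms(3) by simp
  also have "\<dots> = x \<otimes> inv g" using assms(1,2) by (simp add: m_assoc[symmetric])
  finally show ?thesis .
qed

lemma subgroup_centralizer:
  assumes "x \<in> carrier G"
  shows "subgroup (centralizer G x) G"
proof (rule subgroupI)
  fix g h assume "g \<in> centralizer G x" "h \<in> centralizer G x"
  then have g: "g \<in> carrier G" "g \<otimes> x = x \<otimes> g" and h: "h \<in> carrier G" "h \<otimes> x = x \<otimes> h"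
    by (auto simp: centralizer_def)
  have "g \<otimes> h \<otimes> x = g \<otimes> (x \<otimes> h)" using g h assms by (simp add: m_assoc)
  also have "\<dots> = x \<otimes> g \<otimes> h" using g h assms by (simp add: m_assoc[symmetric])
  also have "\<dots> = x \<otimes> (g \<otimes> h)" using g h assms by (simp add: m_assoc)
  finally show "g \<otimes> h \<in> centralizer G x" using g h by (simp add: centralizer_def)
next
  fix g assume "g \<in> centralizer G x"
  then show "inv g \<in> centralizer G x"
    using inv_commute[of g x] assms by (simp add: centralizer_def)
qed (use assms in \<open>auto simp: centralizer_def\<close>)

lemma abelian_subgroup_centralizer:
  assumes "commutative_transitive G" and "group_center G = {\<one>}"
    and "x \<in> carrier G" and "x \<noteq> \<one>"
  shows "abelian_subgroup (centralizer G x) G"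
  unfolding abelian_subgroup_def
proof (intro conjI ballI)
  show "subgroup (centralizer G x) G" using subgroup_centralizer[OF assms(3)] .
  fix u v assume uv: "u \<in> centralizer G x" "v \<in> centralizer G x"
  show "u \<otimes> v = v \<otimes> u"
  proof (cases "u = \<one> \<or> v = \<one>")
    case True then show ?thesis using uv by (auto simp: centralizer_def)
  next
    case False
    then have "u \<in> carrier G - group_center G" "x \<in> carrier G - group_center G"
      "v \<in> carrier G - group_center G" "u \<otimes> x = x \<otimes> u" "x \<otimes> v = v \<otimes> x"
      using uv assms(2-4) by (auto simp: centralizer_def)
    then show ?thesis using assms(1)[unfolded commutative_transitive_def] by blast
  qed
qed

lemma maximal_abelian_subgroup_eq_centralizer:
  assumes "commutative_transitive G" and "group_center G = {\<one>}"
    and H: "maximal_abelian_subgroup H G" and x: "x \<in> H" "x \<noteq> \<one>"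
  shows "H = centralizer G x"
proof -
  have "subgroup H G" and commutes: "\<forall>y \<in> H. y \<otimes> x = x \<otimes> y"
    using H x(1) unfolding maximal_abelian_subgroup_def abelian_subgroup_def by blast+
  then have "H \<subseteq> carrier G" by (simp add: subgroup.subset)
  with commutes have "H \<subseteq> centralizer G x" by (auto simp: centralizer_def)
  moreover have "abelian_subgroup (centralizer G x) G"
    using abelian_subgroup_centralizer[OF assms(1,2)] x \<open>H \<subseteq> carrier G\<close> by blast
  ultimately show ?thesis using H unfolding maximal_abelian_subgroup_def by blast
qed

lemma maximal_abelian_subgroups_Int:
  assumes "commutative_transitive G" and "group_center G = {\<one>}"
    and H: "maximal_abelian_subgroup H G" and K: "maximal_abelian_subgroup K G" and "H \<noteq> K"
  shows "H \<inter> K = {\<one>}"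
proof -
  have "subgroup H G" "subgroup K G"
    using H K unfolding maximal_abelian_subgroup_def abelian_subgroup_def by blast+
  then have "\<one> \<in> H" "\<one> \<in> K" by (simp_all add: subgroup.one_closed)
  moreover have "x = \<one>" if "x \<in> H" "x \<in> K" for x
  proof (rule ccontr)
    assume "x \<noteq> \<one>"
    then have "H = centralizer G x" "K = centralizer G x"
      using maximal_abelian_subgroup_eq_centralizer[OF assms(1,2) H that(1)]
        maximal_abelian_subgroup_eq_centralizer[OF assms(1,2) K that(2)] by blast+
    with \<open>H \<noteq> K\<close> show False by simp
  qed
  ultimately show ?thesis by blast
qed

lemma abelian_subgroup_generate_singleton:
  assumes g: "g \<in> carrier G"
  shows "abelian_subgroup (generate G {g}) G"
  unfolding abelian_subgroup_def
proof (intro conjI ballI)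
  show "subgroup (generate G {g}) G" using g by (intro generate_is_subgroup) auto
  fix x y assume "x \<in> generate G {g}" "y \<in> generate G {g}"
  then obtain k l :: int where "x = g [^] k" "y = g [^] l"
    unfolding generate_pow[OF g] by blast
  then show "x \<otimes> y = y \<otimes> x" using g by (simp flip: int_pow_mult add: add.commute)
qed

lemma maximal_abelian_subgroup_trivial_imp_trivial:
  assumes "maximal_abelian_subgroup {\<one>} G"
  shows "carrier G = {\<one>}"
proof -
  have "g = \<one>" if g: "g \<in> carrier G" for g
  proof -
    have "{\<one>} \<subseteq> generate G {g}" using g generate.one by blast
    then have "generate G {g} = {\<one>}"
      using assms abelian_subgroup_generate_singleton[OF g]
      unfolding maximal_abelian_subgroup_def by blast
    then show ?thesis using generate.incl[of g "{g}" G] by simp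
  qed
  then show ?thesis by auto
qed

lemma card_maximal_abelian_subgroup_ge_2:
  assumes "finite (carrier G)"
    and H: "maximal_abelian_subgroup H G" and K: "maximal_abelian_subgroup K G" and "H \<noteq> K"
  shows "card H \<ge> 2"
proof (rule ccontr)
  assume "\<not> card H \<ge> 2"
  have subgroups: "subgroup H G" "subgroup K G"
    using H K unfolding maximal_abelian_subgroup_def abelian_subgroup_def by blast+
  then have "finite H" using assms(1) subgroup.subset finite_subset by metis
  moreover have "card H \<le> Suc 0" using \<open>\<not> card H \<ge> 2\<close> by simp
  ultimately have "\<forall>x\<in>H. \<forall>y\<in>H. x = y" using card_le_Suc0_iff_eq by blast
  then have "H = {\<one>}" using subgroup.one_closed[OF subgroups(1)] by blast
  then have "carrier G = {\<one>}" using H maximal_abelian_subgroup_trivial_imp_trivial by blast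
  then have "K = H"
    using \<open>H = {\<one>}\<close> subgroup.subset[OF subgroups(2)] subgroup.one_closed[OF subgroups(2)]
    by blast
  with \<open>H \<noteq> K\<close> show False by simp
qed

lemma card_carrier_of_trivially_intersecting_cover:
  fixes H :: "nat \<Rightarrow> 'a set"
  assumes "finite (carrier G)" and sub: "\<And>i. i < n \<Longrightarrow> subgroup (H i) G"
    and disj: "\<And>i j. i < n \<Longrightarrow> j < n \<Longrightarrow> i \<noteq> j \<Longrightarrow> H i \<inter> H j = {\<one>}"
    and cover: "(\<Union>i<n. H i) = carrier G"
  shows "int (card (carrier G)) = 1 + (\<Sum>i<n. int (card (H i)) - 1)"
proof -
  have fin: "finite (H i)" and one: "\<one> \<in> H i" if "i < n" for i
    using sub[OF that] assms(1) subgroup.subset finite_subset subgroup.one_closed by metis+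
  have "card (\<Union>i<n. H i - {\<one>}) = (\<Sum>i<n. card (H i - {\<one>}))"
  proof (rule card_UN_disjoint)
    show "\<forall>i\<in>{..<n}. \<forall>j\<in>{..<n}. i \<noteq> j \<longrightarrow> (H i - {\<one>}) \<inter> (H j - {\<one>}) = {}"
      using disj by blast
  qed (use fin in auto)
  moreover have "int (card (H i - {\<one>})) = int (card (H i)) - 1" if "i < n" for i
    using card_Suc_Diff1[OF fin[OF that] one[OF that]] by simp
  ultimately have card_punctured: "int (card (\<Union>i<n. H i - {\<one>})) = (\<Sum>i<n. int (card (H i)) - 1)"
    by (simp add: of_nat_sum)
  have carrier_eq: "carrier G = insert \<one> (\<Union>i<n. H i - {\<one>})" using cover by auto
  have "card (carrier G) = Suc (card (\<Union>i<n. H i - {\<one>}))"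
    by (subst carrier_eq, rule card_insert_disjoint) (use fin in auto)
  then show ?thesis using card_punctured by simp
qed

end

theorem lemma7p4:
  fixes G (structure) and Gs :: "nat \<Rightarrow> 'a set" and n :: nat
  assumes "group G"
    and "finite (carrier G)"
    and "commutative_transitive G"
    and "group_center G = {\<one>\<^bsub>G\<^esub>}"
    and "inj_on Gs {..<n}"
    and "Gs ` {..<n} = {H. maximal_abelian_subgroup H G}"
    and "(\<Union>i<n. Gs i) = carrier G"
    and "n \<ge> 3"
  shows "1 + (int n - 1) * (\<Prod>i<n. int (card (Gs i)))
           - (\<Sum>i<n. \<Prod>j\<in>{..<n} - {i}. int (card (Gs j)))
         > 1 + (int n - 1) * int (card (carrier G))
           - (\<Sum>i<n. int (card (carrier G)) div int (card (Gs i)))"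
proof -
  interpret group G by fact
  have max: "maximal_abelian_subgroup (Gs i) G" if "i < n" for i
    using assms(6) that by blast
  have sub: "subgroup (Gs i) G" if "i < n" for i
    using max[OF that] unfolding maximal_abelian_subgroup_def abelian_subgroup_def by blast
  have distinct: "Gs i \<noteq> Gs j" if "i < n" "j < n" "i \<noteq> j" for i j
    using assms(5) that by (auto dest: inj_onD)
  have card_ge_2: "card (Gs i) \<ge> 2" if "i < n" for i
  proof -
    have "\<exists>j<n. j \<noteq> i" using assms(8) by presburger
    then obtain j where "j < n" "j \<noteq> i" by blast
    then show ?thesis
      using card_maximal_abelian_subgroup_ge_2[OF assms(2) max max] distinct that by blast
  qed
  have card_G: "int (card (carrier G)) = 1 + (\<Sum>i<n. int (card (Gs i)) - 1)"
  proof (rule card_carrier_of_trivially_intersecting_cover[OF assms(2) sub _ assms(7)])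
    fix i j assume "i < n" "j < n" "i \<noteq> j"
    then show "Gs i \<inter> Gs j = {\<one>}"
      using maximal_abelian_subgroups_Int[OF assms(3,4) max max] distinct by blast
  qed
  have dvd: "int (card (Gs i)) dvd int (card (carrier G))" if "i < n" for i
    using lagrange[OF sub[OF that]] unfolding order_def by (metis dvd_triv_right of_nat_dvd_iff)
  show ?thesis
    by (rule prod_formula_gt_quotient_formula) (use card_ge_2 assms(8) card_G dvd in auto)
qed

end
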